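(* Let $A,B$ be $2n\times2n$ real symmetric positive definite matrices such that $AJB=BJA$ and $AB=BA$. Then $A^sJB^s=B^sJA^s$ for every $s\in\mathbb{R}$.
   Context: $J:=I_n\otimes\begin{pmatrix}0&1\\-1&0\end{pmatrix}$, where $I_n$ is the $n\times n$ identity matrix and $\otimes$ is the Kronecker product. For a real symmetric positive definite matrix $A$ and $s\in\mathbb{R}$, $A^s$ denotes the real symmetric positive definite matrix obtained by raising the eigenvalues of $A$ to the power $s$ in its spectral decomposition. *)

theory Defs
  imports "Jordan_Normal_Form.Matrix"
begin

definition sym_pos_def_mat :: "nat \<Rightarrow> real mat \<Rightarrow> bool" where
  "sym_pos_def_mat n A \<longleftrightarrow> A \<in> carrier_mat n n \<and> transpose_mat A = A \<and>
     (\<forall>x \<in> carrier_vec n. x \<noteq> 0\<^sub>v n \<longrightarrow> 0 < x \<bullet> (A *\<^sub>v x))"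

definition mat_rpow :: "real mat \<Rightarrow> real \<Rightarrow> real mat" where
  "mat_rpow A s = (SOME P. \<exists>U d. U \<in> carrier_mat (dim_row A) (dim_row A) \<and>
      transpose_mat U * U = 1\<^sub>m (dim_row A) \<and>
      (\<forall>i < dim_row A. 0 < d i) \<and>
      A = U * mat_diag (dim_row A) d * transpose_mat U \<and>
      P = U * mat_diag (dim_row A) (\<lambda>i. d i powr s) * transpose_mat U)"

text \<open>J = I_n (Kronecker) [[0,1],[-1,0]], a 2n x 2n matrix (0-based indices).\<close>
definition Jmat :: "nat \<Rightarrow> real mat" where
  "Jmat n = mat (2*n) (2*n) (\<lambda>(i,j).
      if i div 2 = j div 2 then
        (if even i \<and> odd j then 1 else if odd i \<and> even j then -1 else 0)
      else 0)"

end

theory Submission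
  imports Defs "Jordan_Normal_Form.Char_Poly"
begin

(* Diagonalise A = U diag(a) U^T and B = V diag(b) V^T with U, V orthogonal; the eigenvalues are
   real by symmetry and positive by definiteness. Let P_m and Q_p be the spectral projections of A
   and B belonging to the eigenvalues a_m and b_p. As A and B commute, every function of B commutes
   with every P_m, so sandwiching A J B = B J A between Q_p P_m and P_n Q_q gives
   a_m b_q W = b_p a_n W  with  W = Q_p P_m J P_n Q_q.
   Thus W = 0 or a_m b_q = b_p a_n, and either way the same relation holds for the s-th powers,
   which act on these blocks by the scalars a_m^s, b_q^s, b_p^s, a_n^s. A matrix is determined by
   all its blocks, so A^s J B^s = B^s J A^s. Any orthogonal diagonalisation works, so it does not
   matter which one the definition of the matrix power chooses. *)

lemmas dim_mat_diag [simp] = carrier_matD[OF mat_diag_dim]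

lemma mult_carrier_mat_square [simp]:
  "A \<in> carrier_mat N N \<Longrightarrow> B \<in> carrier_mat N N \<Longrightarrow> A * B \<in> carrier_mat N N"
  by (rule mult_carrier_mat)

lemma mat_diag_mult_assoc [simp]:
  "X \<in> carrier_mat N N \<Longrightarrow> mat_diag N f * (mat_diag N g * X) = mat_diag N (\<lambda>i. f i * g i) * X"
  by (subst assoc_mult_mat[symmetric, of _ N N _ N _ N]) auto

lemma index_mat_diag_sandwich:
  assumes "Z \<in> carrier_mat N N" "i < N" "j < N"
  shows "(mat_diag N f * Z * mat_diag N g) $$ (i, j) = f i * Z $$ (i, j) * g j"
  using assms by (simp add: mat_diag_mult_left[of Z N N] mat_diag_mult_right[of _ N N])

lemma mat_diag_commute_fun:
  fixes Y :: "'a :: idom mat"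
  assumes Y: "Y \<in> carrier_mat N N" and comm: "Y * mat_diag N d = mat_diag N d * Y"
  shows "Y * mat_diag N (\<lambda>k. f (d k)) = mat_diag N (\<lambda>k. f (d k)) * Y"
proof (rule eq_matI)
  fix i j assume "i < dim_row (mat_diag N (\<lambda>k. f (d k)) * Y)" "j < dim_col (mat_diag N (\<lambda>k. f (d k)) * Y)"
  then have i: "i < N" and j: "j < N"
    using Y by simp_all
  have "(Y * mat_diag N d) $$ (i, j) = (mat_diag N d * Y) $$ (i, j)"
    using comm by simp
  then have "(d j - d i) * Y $$ (i, j) = 0"
    using i j Y by (simp add: mat_diag_mult_left[OF Y] mat_diag_mult_right[OF Y] algebra_simps)
  then have "Y $$ (i, j) = 0 \<or> d i = d j"
    by auto
  then show "(Y * mat_diag N (\<lambda>k. f (d k))) $$ (i, j) = (mat_diag N (\<lambda>k. f (d k)) * Y) $$ (i, j)"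
    using i j Y by (auto simp: mat_diag_mult_left[OF Y] mat_diag_mult_right[OF Y])
qed (use Y in auto)

lemma smult_smult_mat: "c \<cdot>\<^sub>m (d \<cdot>\<^sub>m A) = (c * d) \<cdot>\<^sub>m (A :: 'a :: semigroup_mult mat)"
  by (rule eq_matI) (simp_all add: mult.assoc)

lemma smult_mat_cancel:
  fixes W :: "'a :: idom mat"
  assumes "c \<cdot>\<^sub>m W = d \<cdot>\<^sub>m W"
  shows "W = 0\<^sub>m (dim_row W) (dim_col W) \<or> c = d"
proof (rule disjCI)
  assume "c \<noteq> d"
  show "W = 0\<^sub>m (dim_row W) (dim_col W)"
  proof (rule eq_matI)
    fix i j assume ij: "i < dim_row (0\<^sub>m (dim_row W) (dim_col W))" "j < dim_col (0\<^sub>m (dim_row W) (dim_col W))"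
    then have "(c - d) * W $$ (i, j) = 0"
      using arg_cong[OF assms, of "\<lambda>M. M $$ (i, j)"] by (simp add: algebra_simps)
    then show "W $$ (i, j) = 0\<^sub>m (dim_row W) (dim_col W) $$ (i, j)"
      using \<open>c \<noteq> d\<close> ij by simp
  qed simp_all
qed

lemma smult_sandwich:
  fixes E :: "'a :: comm_ring_1 mat"
  assumes carrier: "E \<in> carrier_mat N N" "E' \<in> carrier_mat N N" "X \<in> carrier_mat N N"
      "Y \<in> carrier_mat N N" "J \<in> carrier_mat N N"
    and left: "E * X = c \<cdot>\<^sub>m E" and right: "Y * E' = d \<cdot>\<^sub>m E'"
  shows "E * (X * J * Y) * E' = (c * d) \<cdot>\<^sub>m (E * J * E')"
proof -
  have "E * (X * J * Y) * E' = E * X * J * (Y * E')"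
    using carrier by (simp add: assoc_mult_mat[of _ N N _ N _ N])
  also have "\<dots> = (c * d) \<cdot>\<^sub>m (E * J * E')"
    unfolding left right using carrier
    by (simp add: mult_smult_distrib[of _ N N _ N] mult_smult_assoc_mat[of _ N N _ N] smult_smult_mat mult.commute)
  finally show ?thesis .
qed

section \<open>Orthogonal diagonalisation\<close>

definition orth_mat :: "nat \<Rightarrow> real mat \<Rightarrow> bool" where
  "orth_mat N U \<longleftrightarrow> U \<in> carrier_mat N N \<and> transpose_mat U * U = 1\<^sub>m N"

definition orth_diag :: "nat \<Rightarrow> real mat \<Rightarrow> (nat \<Rightarrow> real) \<Rightarrow> real mat" where
  "orth_diag N U d = U * mat_diag N d * transpose_mat U"

lemma orth_mat_carrier: "orth_mat N U \<Longrightarrow> U \<in> carrier_mat N N"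
  unfolding orth_mat_def by simp

lemma orth_mat_transpose_mult: "orth_mat N U \<Longrightarrow> transpose_mat U * U = 1\<^sub>m N"
  unfolding orth_mat_def by simp

lemma orth_mat_mult_transpose: "orth_mat N U \<Longrightarrow> U * transpose_mat U = 1\<^sub>m N"
  unfolding orth_mat_def using mat_mult_left_right_inverse[of "transpose_mat U" N U] by simp

lemma orth_mat_mult:
  assumes U: "orth_mat N U" and V: "orth_mat N V"
  shows "orth_mat N (U * V)"
proof -
  note carrier = orth_mat_carrier[OF U] orth_mat_carrier[OF V]
  have "transpose_mat (U * V) * (U * V) = transpose_mat V * (transpose_mat U * U) * V"
    using carrier by (simp add: transpose_mult[of _ N N] assoc_mult_mat[of _ N N _ N _ N])
  then show ?thesis
    using carrier by (simp add: orth_mat_def orth_mat_transpose_mult[OF U] orth_mat_transpose_mult[OF V])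
qed

lemma orth_mat_cancel_left:
  "orth_mat N U \<Longrightarrow> X \<in> carrier_mat N N \<Longrightarrow> transpose_mat U * (U * X) = X"
  by (subst assoc_mult_mat[symmetric, of _ N N _ N _ N])
    (auto simp: orth_mat_transpose_mult dest: orth_mat_carrier)

lemma orth_mat_cancel_right:
  "orth_mat N U \<Longrightarrow> X \<in> carrier_mat N N \<Longrightarrow> U * (transpose_mat U * X) = X"
  by (subst assoc_mult_mat[symmetric, of _ N N _ N _ N])
    (auto simp: orth_mat_mult_transpose dest: orth_mat_carrier)

lemma orth_mat_conj_cancel:
  assumes U: "orth_mat N U" and X: "X \<in> carrier_mat N N" and Y: "Y \<in> carrier_mat N N"
    and eq: "transpose_mat U * X * U = transpose_mat U * Y * U"
  shows "X = Y"
proof -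
  have "Z = U * (transpose_mat U * Z * U) * transpose_mat U" if "Z \<in> carrier_mat N N" for Z
    using that U orth_mat_carrier[OF U]
    by (simp add: assoc_mult_mat[of _ N N _ N _ N] orth_mat_cancel_right orth_mat_mult_transpose)
  then show ?thesis
    using X Y eq by metis
qed

lemma orth_diag_carrier [simp]: "orth_mat N U \<Longrightarrow> orth_diag N U d \<in> carrier_mat N N"
  unfolding orth_diag_def by (metis mat_diag_dim mult_carrier_mat orth_mat_carrier transpose_carrier_mat)

lemma orth_diag_conj:
  assumes "orth_mat N U" and "X \<in> carrier_mat N N"
  shows "transpose_mat U * (orth_diag N U f * X * orth_diag N U g) * U
       = mat_diag N f * (transpose_mat U * X * U) * mat_diag N g"
  using assms orth_mat_carrier[OF assms(1)]
  by (simp add: orth_diag_def assoc_mult_mat[of _ N N _ N _ N] orth_mat_cancel_left orth_mat_transpose_mult)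

lemma orth_diag_mult:
  assumes "orth_mat N U"
  shows "orth_diag N U f * orth_diag N U g = orth_diag N U (\<lambda>i. f i * g i)"
  using assms orth_mat_carrier[OF assms]
  by (simp add: orth_diag_def assoc_mult_mat[of _ N N _ N _ N] orth_mat_cancel_left orth_mat_transpose_mult)

lemma orth_diag_smult:
  assumes "orth_mat N U"
  shows "orth_diag N U (\<lambda>i. c * f i) = c \<cdot>\<^sub>m orth_diag N U f"
proof -
  have "mat_diag N (\<lambda>i. c * f i) = c \<cdot>\<^sub>m mat_diag N f"
    by (rule eq_matI) (auto simp: mat_diag_def)
  then show ?thesis
    using orth_mat_carrier[OF assms]
    by (simp add: orth_diag_def mult_smult_distrib[of _ N N _ N] mult_smult_assoc_mat[of _ N N _ N])
qed

lemma orth_diag_orth_conj: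
  assumes H: "orth_mat N H" and F: "orth_mat N F"
  shows "H * orth_diag N F d * transpose_mat H = orth_diag N (H * F) d"
  using orth_mat_carrier[OF H] orth_mat_carrier[OF F]
  by (simp add: orth_diag_def transpose_mult[of _ N N _ N] assoc_mult_mat[of _ N N _ N _ N])

lemma orth_diag_commute_fun:
  assumes U: "orth_mat N U" and X: "X \<in> carrier_mat N N"
    and comm: "X * orth_diag N U d = orth_diag N U d * X"
  shows "X * orth_diag N U (\<lambda>k. f (d k)) = orth_diag N U (\<lambda>k. f (d k)) * X"
proof -
  define Y where "Y = transpose_mat U * X * U"
  have Y: "Y \<in> carrier_mat N N"
    unfolding Y_def using X orth_mat_carrier[OF U] by simp
  have conj: "transpose_mat U * (X * orth_diag N U g) * U = Y * mat_diag N g"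
    "transpose_mat U * (orth_diag N U g * X) * U = mat_diag N g * Y" for g
    unfolding Y_def orth_diag_def using U X orth_mat_carrier[OF U]
    by (simp_all add: assoc_mult_mat[of _ N N _ N _ N] orth_mat_cancel_left orth_mat_transpose_mult)
  have "Y * mat_diag N d = mat_diag N d * Y"
    using conj[of d] comm by metis
  then have "Y * mat_diag N (\<lambda>k. f (d k)) = mat_diag N (\<lambda>k. f (d k)) * Y"
    by (rule mat_diag_commute_fun[OF Y])
  then have "transpose_mat U * (X * orth_diag N U (\<lambda>k. f (d k))) * U
      = transpose_mat U * (orth_diag N U (\<lambda>k. f (d k)) * X) * U"
    unfolding conj .
  then show ?thesis
    by (rule orth_mat_conj_cancel[OF U, rotated 2]) (use U X in simp_all)
qed

section \<open>Spectral projections\<close>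

(* Indexed by a position m < N rather than by the eigenvalue d m itself, so a repeated eigenvalue
   gives the same projection several times. *)
definition eigen_proj :: "nat \<Rightarrow> real mat \<Rightarrow> (nat \<Rightarrow> real) \<Rightarrow> nat \<Rightarrow> real mat" where
  "eigen_proj N U d m = orth_diag N U (\<lambda>k. if d k = d m then 1 else 0)"

lemma eigen_proj_carrier [simp]: "orth_mat N U \<Longrightarrow> eigen_proj N U d m \<in> carrier_mat N N"
  unfolding eigen_proj_def by simp

lemma eigen_proj_mult_orth_diag:
  assumes U: "orth_mat N U"
  shows "eigen_proj N U d m * orth_diag N U (\<lambda>k. f (d k)) = f (d m) \<cdot>\<^sub>m eigen_proj N U d m"
    and "orth_diag N U (\<lambda>k. f (d k)) * eigen_proj N U d m = f (d m) \<cdot>\<^sub>m eigen_proj N U d m"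
proof -
  have "(\<lambda>k. (if d k = d m then 1 else 0) * f (d k)) = (\<lambda>k. f (d m) * (if d k = d m then 1 else 0))"
    and "(\<lambda>k. f (d k) * (if d k = d m then 1 else 0)) = (\<lambda>k. f (d m) * (if d k = d m then 1 else 0))"
    by auto
  then show "eigen_proj N U d m * orth_diag N U (\<lambda>k. f (d k)) = f (d m) \<cdot>\<^sub>m eigen_proj N U d m"
    and "orth_diag N U (\<lambda>k. f (d k)) * eigen_proj N U d m = f (d m) \<cdot>\<^sub>m eigen_proj N U d m"
    unfolding eigen_proj_def orth_diag_mult[OF U] by (simp_all only: orth_diag_smult[OF U])
qed

lemma eq_by_eigen_proj:
  assumes U: "orth_mat N U" and X: "X \<in> carrier_mat N N" and Y: "Y \<in> carrier_mat N N"
    and eq: "\<And>m n. m < N \<Longrightarrow> n < N \<Longrightarrow>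
      eigen_proj N U d m * X * eigen_proj N U d n = eigen_proj N U d m * Y * eigen_proj N U d n"
  shows "X = Y"
proof (rule orth_mat_conj_cancel[OF U X Y], rule eq_matI)
  fix m n assume "m < dim_row (transpose_mat U * Y * U)" "n < dim_col (transpose_mat U * Y * U)"
  then have m: "m < N" and n: "n < N"
    using Y orth_mat_carrier[OF U] by auto
  have entry: "(transpose_mat U * (eigen_proj N U d m * Z * eigen_proj N U d n) * U) $$ (m, n)
      = (transpose_mat U * Z * U) $$ (m, n)" if "Z \<in> carrier_mat N N" for Z
    unfolding eigen_proj_def orth_diag_conj[OF U that]
    using m n that orth_mat_carrier[OF U] by (subst index_mat_diag_sandwich[of _ N]) simp_all
  show "(transpose_mat U * X * U) $$ (m, n) = (transpose_mat U * Y * U) $$ (m, n)"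
    using entry[OF X] entry[OF Y] eq[OF m n] by metis
qed (use X Y orth_mat_carrier[OF U] in simp_all)

lemma eq_by_joint_eigen_proj:
  assumes U: "orth_mat N U" and V: "orth_mat N V"
    and X: "X \<in> carrier_mat N N" and Y: "Y \<in> carrier_mat N N"
    and eq: "\<And>m n p q. m < N \<Longrightarrow> n < N \<Longrightarrow> p < N \<Longrightarrow> q < N \<Longrightarrow>
      eigen_proj N V b p * eigen_proj N U a m * X * (eigen_proj N U a n * eigen_proj N V b q)
    = eigen_proj N V b p * eigen_proj N U a m * Y * (eigen_proj N U a n * eigen_proj N V b q)"
  shows "X = Y"
proof (rule eq_by_eigen_proj[OF U X Y])
  fix m n assume m: "m < N" and n: "n < N"
  have reassoc: "eigen_proj N V b p * (eigen_proj N U a m * Z * eigen_proj N U a n) * eigen_proj N V b q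
      = eigen_proj N V b p * eigen_proj N U a m * Z * (eigen_proj N U a n * eigen_proj N V b q)"
    if "Z \<in> carrier_mat N N" for Z p q
    using that U V by (simp add: assoc_mult_mat[of _ N N _ N _ N])
  show "eigen_proj N U a m * X * eigen_proj N U a n = eigen_proj N U a m * Y * eigen_proj N U a n"
    by (rule eq_by_eigen_proj[OF V, where d = b]) (use U X Y m n eq reassoc in simp_all)
qed

lemma orth_diag_commute_eigen_proj:
  assumes U: "orth_mat N U" and V: "orth_mat N V"
    and comm: "orth_diag N U a * orth_diag N V b = orth_diag N V b * orth_diag N U a"
  shows "orth_diag N V (\<lambda>k. g (b k)) * eigen_proj N U a m = eigen_proj N U a m * orth_diag N V (\<lambda>k. g (b k))"
proof -
  have "orth_diag N U a * orth_diag N V (\<lambda>k. g (b k)) = orth_diag N V (\<lambda>k. g (b k)) * orth_diag N U a"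
    using orth_diag_commute_fun[OF V _ comm] U by simp
  then show ?thesis
    unfolding eigen_proj_def
    using orth_diag_commute_fun[OF U _, of "orth_diag N V (\<lambda>k. g (b k))" a "\<lambda>x. if x = a m then 1 else 0"] V
    by simp
qed

lemma joint_eigen_proj_sandwich:
  fixes m n p q :: nat and f g :: "real \<Rightarrow> real"
  assumes U: "orth_mat N U" and V: "orth_mat N V" and J: "J \<in> carrier_mat N N"
    and comm: "orth_diag N U a * orth_diag N V b = orth_diag N V b * orth_diag N U a"
  defines "E \<equiv> eigen_proj N V b p * eigen_proj N U a m"
    and "E' \<equiv> eigen_proj N U a n * eigen_proj N V b q"
    and "F \<equiv> orth_diag N U (\<lambda>k. f (a k))" and "G \<equiv> orth_diag N V (\<lambda>k. g (b k))"
  shows "E * (F * J * G) * E' = (f (a m) * g (b q)) \<cdot>\<^sub>m (E * J * E')"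
    and "E * (G * J * F) * E' = (g (b p) * f (a n)) \<cdot>\<^sub>m (E * J * E')"
proof -
  let ?P = "eigen_proj N U a" and ?Q = "eigen_proj N V b"
  have carrier: "?P k \<in> carrier_mat N N" "?Q k \<in> carrier_mat N N" "F \<in> carrier_mat N N"
    "G \<in> carrier_mat N N" "E \<in> carrier_mat N N" "E' \<in> carrier_mat N N" for k
    unfolding E_def E'_def F_def G_def using U V by simp_all
  have GP: "G * ?P k = ?P k * G" for k
    unfolding G_def by (rule orth_diag_commute_eigen_proj[OF U V comm])
  have PF: "?P k * F = f (a k) \<cdot>\<^sub>m ?P k" "F * ?P k = f (a k) \<cdot>\<^sub>m ?P k" for k
    unfolding F_def by (rule eigen_proj_mult_orth_diag[OF U])+
  have QG: "?Q k * G = g (b k) \<cdot>\<^sub>m ?Q k" "G * ?Q k = g (b k) \<cdot>\<^sub>m ?Q k" for k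
    unfolding G_def by (rule eigen_proj_mult_orth_diag[OF V])+
  have EF: "E * F = f (a m) \<cdot>\<^sub>m E"
    unfolding E_def using carrier
    by (simp add: assoc_mult_mat[of _ N N _ N _ N] PF mult_smult_distrib[of _ N N _ N])
  have FE': "F * E' = f (a n) \<cdot>\<^sub>m E'"
    unfolding E'_def using carrier
    by (simp add: assoc_mult_mat[symmetric, of _ N N _ N _ N] PF mult_smult_assoc_mat[of _ N N _ N])
  have EG: "E * G = g (b p) \<cdot>\<^sub>m E"
  proof -
    have "E * G = ?Q p * G * ?P m"
      unfolding E_def using carrier by (simp add: assoc_mult_mat[of _ N N _ N _ N] GP)
    then show ?thesis
      unfolding E_def QG using carrier by (simp add: mult_smult_assoc_mat[of _ N N _ N])
  qed
  have GE': "G * E' = g (b q) \<cdot>\<^sub>m E'"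
  proof -
    have "G * E' = ?P n * (G * ?Q q)"
      unfolding E'_def using carrier by (simp add: assoc_mult_mat[symmetric, of _ N N _ N _ N] GP)
    then show ?thesis
      unfolding E'_def QG using carrier by (simp add: mult_smult_distrib[of _ N N _ N])
  qed
  show "E * (F * J * G) * E' = (f (a m) * g (b q)) \<cdot>\<^sub>m (E * J * E')"
    by (rule smult_sandwich[OF carrier(5,6,3,4) J EF GE'])
  show "E * (G * J * F) * E' = (g (b p) * f (a n)) \<cdot>\<^sub>m (E * J * E')"
    by (rule smult_sandwich[OF carrier(5,6,4,3) J EG FE'])
qed

lemma orth_diag_powr_sandwich_commute:
  assumes U: "orth_mat N U" and V: "orth_mat N V" and J: "J \<in> carrier_mat N N"
    and a_pos: "\<forall>i<N. 0 < a i" and b_pos: "\<forall>i<N. 0 < b i"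
    and comm: "orth_diag N U a * orth_diag N V b = orth_diag N V b * orth_diag N U a"
    and sandwich: "orth_diag N U a * J * orth_diag N V b = orth_diag N V b * J * orth_diag N U a"
  shows "orth_diag N U (\<lambda>k. a k powr s) * J * orth_diag N V (\<lambda>k. b k powr s)
       = orth_diag N V (\<lambda>k. b k powr s) * J * orth_diag N U (\<lambda>k. a k powr s)"
proof (rule eq_by_joint_eigen_proj[OF U V, where a = a and b = b])
  fix m n p q assume m: "m < N" and n: "n < N" and p: "p < N" and q: "q < N"
  let ?W = "eigen_proj N V b p * eigen_proj N U a m * J * (eigen_proj N U a n * eigen_proj N V b q)"
  note blocks = joint_eigen_proj_sandwich[OF U V J comm, where p = p and m = m and n = n and q = q]
  have "(a m * b q) \<cdot>\<^sub>m ?W = (b p * a n) \<cdot>\<^sub>m ?W"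
    using blocks[where f = "\<lambda>x. x" and g = "\<lambda>x. x"] sandwich by simp
  then have "?W = 0\<^sub>m (dim_row ?W) (dim_col ?W) \<or> a m * b q = b p * a n"
    by (rule smult_mat_cancel)
  then have "(a m powr s * b q powr s) \<cdot>\<^sub>m ?W = (b p powr s * a n powr s) \<cdot>\<^sub>m ?W"
    using a_pos b_pos m n p q by (auto simp: powr_mult[symmetric])
  then show "eigen_proj N V b p * eigen_proj N U a m *
      (orth_diag N U (\<lambda>k. a k powr s) * J * orth_diag N V (\<lambda>k. b k powr s)) *
      (eigen_proj N U a n * eigen_proj N V b q) =
    eigen_proj N V b p * eigen_proj N U a m *
      (orth_diag N V (\<lambda>k. b k powr s) * J * orth_diag N U (\<lambda>k. a k powr s)) *
      (eigen_proj N U a n * eigen_proj N V b q)"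
    using blocks[where f = "\<lambda>x. x powr s" and g = "\<lambda>x. x powr s"] by simp
qed (use U V J in simp_all)

section \<open>The spectral theorem for real symmetric matrices\<close>

lemma conjugate_mult_mat_vec_of_real:
  fixes A :: "real mat" and v :: "complex vec"
  assumes "A \<in> carrier_mat N N" "v \<in> carrier_vec N"
  shows "conjugate (map_mat complex_of_real A *\<^sub>v v) = map_mat complex_of_real A *\<^sub>v conjugate v"
proof (rule eq_vecI)
  fix i assume "i < dim_vec (map_mat complex_of_real A *\<^sub>v conjugate v)"
  then have i: "i < N" using assms by simp
  have "conjugate (row (map_mat complex_of_real A) i) = row (map_mat complex_of_real A) i"
    using assms i by (intro eq_vecI) simp_all
  then show "conjugate (map_mat complex_of_real A *\<^sub>v v) $ i = (map_mat complex_of_real A *\<^sub>v conjugate v) $ i"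
    using assms i conjugate_sprod_vec[of "row (map_mat complex_of_real A) i" N v] by simp
qed (use assms in simp)

lemma real_symmetric_eigenvalue_real:
  fixes A :: "real mat"
  assumes A: "A \<in> carrier_mat N N" and sym: "transpose_mat A = A"
    and ev: "eigenvector (map_mat complex_of_real A) v z"
  shows "z \<in> \<real>"
proof -
  let ?A = "map_mat complex_of_real A"
  have v: "v \<in> carrier_vec N" "v \<noteq> 0\<^sub>v N" and Av: "?A *\<^sub>v v = z \<cdot>\<^sub>v v"
    using ev A unfolding eigenvector_def by auto
  have "z * (v \<bullet>c v) = (?A *\<^sub>v v) \<bullet>c v"
    using v Av by (simp add: smult_scalar_prod_distrib[of _ N])
  also have "\<dots> = (transpose_mat ?A *\<^sub>v v) \<bullet> conjugate v"
    using sym by (simp add: map_mat_transpose)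
  also have "\<dots> = v \<bullet> (?A *\<^sub>v conjugate v)"
    using A v by (intro transpose_vec_mult_scalar[of _ N N]) simp_all
  also have "\<dots> = v \<bullet>c (?A *\<^sub>v v)"
    using A v by (simp add: conjugate_mult_mat_vec_of_real)
  also have "\<dots> = cnj z * (v \<bullet>c v)"
    using v Av by (simp add: conjugate_smult_vec scalar_prod_smult_distrib[of _ N])
  finally have "z * (v \<bullet>c v) = cnj z * (v \<bullet>c v)" .
  moreover have "v \<bullet>c v \<noteq> 0"
    using v by simp
  ultimately show ?thesis
    by (simp add: Reals_cnj_iff)
qed

lemma real_symmetric_has_eigenvector:
  fixes A :: "real mat"
  assumes A: "A \<in> carrier_mat N N" and sym: "transpose_mat A = A" and N: "0 < N"
  shows "\<exists>r v. eigenvector A v r"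
proof -
  let ?A = "map_mat complex_of_real A"
  have A': "?A \<in> carrier_mat N N" using A by simp
  have "degree (char_poly ?A) = N"
    using degree_monic_char_poly[OF A'] by simp
  then obtain z where "poly (char_poly ?A) z = 0"
    using N fundamental_theorem_of_algebra by (metis constant_degree neq0_conv)
  then have "eigenvalue ?A z"
    using eigenvalue_root_char_poly[OF A'] by simp
  then obtain v where "eigenvector ?A v z"
    unfolding eigenvalue_def by blast
  then have z: "z = of_real (Re z)"
    using real_symmetric_eigenvalue_real[OF A sym] by (simp add: complex_is_Real_iff complex_eq_iff)
  have "poly (map_poly complex_of_real (char_poly A)) z = 0"
    using \<open>poly (char_poly ?A) z = 0\<close> of_real_hom.char_poly_hom[OF A] by metis
  then have "poly (char_poly A) (Re z) = 0"
    by (subst (asm) z) (simp add: of_real_hom.poly_map_poly)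
  then have "eigenvalue A (Re z)"
    using eigenvalue_root_char_poly[OF A] by simp
  then show ?thesis
    unfolding eigenvalue_def by blast
qed

lemma unit_eigenvector:
  fixes A :: "real mat"
  assumes A: "A \<in> carrier_mat N N" and ev: "eigenvector A u r"
  shows "\<exists>v. v \<in> carrier_vec N \<and> v \<bullet> v = 1 \<and> A *\<^sub>v v = r \<cdot>\<^sub>v v"
proof -
  have u: "u \<in> carrier_vec N" "u \<noteq> 0\<^sub>v N" and Au: "A *\<^sub>v u = r \<cdot>\<^sub>v u"
    using ev A unfolding eigenvector_def by auto
  have pos: "0 < u \<bullet> u"
    using conjugate_square_greater_0_vec[OF u(1)] u(2) by simp
  define v where "v = (1 / sqrt (u \<bullet> u)) \<cdot>\<^sub>v u"
  have "v \<bullet> v = (1 / sqrt (u \<bullet> u))\<^sup>2 * (u \<bullet> u)"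
    unfolding v_def using u(1)
    by (simp add: smult_scalar_prod_distrib[of _ N] scalar_prod_smult_distrib[of _ N] power2_eq_square)
  also have "\<dots> = 1"
    using pos by (simp add: power_divide)
  finally have "v \<bullet> v = 1" .
  moreover have "A *\<^sub>v v = r \<cdot>\<^sub>v v"
    unfolding v_def using A u(1) Au by (simp add: mult_mat_vec[of _ N N] smult_smult_assoc mult.commute)
  moreover have "v \<in> carrier_vec N"
    unfolding v_def using u(1) by simp
  ultimately show ?thesis by blast
qed

lemma sum_delta_mult:
  fixes f :: "nat \<Rightarrow> real"
  shows "i < N \<Longrightarrow> (\<Sum>k<N. (if k = i then 1 else 0) * f k) = f i"
  by (simp add: if_distrib[of "\<lambda>x. x * _"] cong: if_cong)

definition householder :: "nat \<Rightarrow> real \<Rightarrow> (nat \<Rightarrow> real) \<Rightarrow> real mat" where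
  "householder N c w = mat N N (\<lambda>(i, j). (if i = j then 1 else 0) - c * w i * w j)"

lemma householder_orth:
  assumes c: "c * c * (\<Sum>k<N. (w k)\<^sup>2) = 2 * c"
  shows "orth_mat N (householder N c w)"
proof -
  let ?H = "householder N c w"
  have "transpose_mat ?H * ?H = 1\<^sub>m N"
  proof (rule eq_matI)
    fix i j assume "i < dim_row (1\<^sub>m N)" "j < dim_col (1\<^sub>m N)"
    then have i: "i < N" and j: "j < N" by simp_all
    have "(transpose_mat ?H * ?H) $$ (i, j) = (\<Sum>k<N. ((if k = i then 1 else 0) - c * w k * w i) *
        ((if k = j then 1 else 0) - c * w k * w j))"
      using i j unfolding householder_def by (simp add: scalar_prod_def lessThan_atLeast0)
    also have "\<dots> = (\<Sum>k<N. (if k = i then 1 else 0) * (if k = j then 1 else 0))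
        - c * w j * (\<Sum>k<N. (if k = i then 1 else 0) * w k)
        - c * w i * (\<Sum>k<N. (if k = j then 1 else 0) * w k) + c * c * w i * w j * (\<Sum>k<N. (w k)\<^sup>2)"
      by (simp add: algebra_simps sum.distrib sum_subtractf sum_distrib_left power2_eq_square)
    also have "\<dots> = (if i = j then 1 else 0) - 2 * c * w i * w j + c * c * (\<Sum>k<N. (w k)\<^sup>2) * w i * w j"
      using i j by (simp add: sum_delta_mult)
    also have "\<dots> = 1\<^sub>m N $$ (i, j)"
      using i j by (simp add: c)
    finally show "(transpose_mat ?H * ?H) $$ (i, j) = 1\<^sub>m N $$ (i, j)" .
  qed (simp_all add: householder_def)
  then show ?thesis
    unfolding orth_mat_def householder_def by simp
qed

lemma orth_mat_with_first_col:
  fixes v :: "real vec"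
  assumes v: "v \<in> carrier_vec N" and unit: "v \<bullet> v = 1" and N: "0 < N"
  shows "\<exists>H. orth_mat N H \<and> col H 0 = v"
proof -
  \<comment> \<open>The reflection in the hyperplane orthogonal to w = v - e_0 maps e_0 to v.\<close>
  define w where "w i = v $ i - (if i = 0 then 1 else 0)" for i
  define \<sigma> where "\<sigma> = (\<Sum>k<N. (w k)\<^sup>2)"
  define c where "c = 2 / \<sigma>"
  have \<sigma>: "\<sigma> = - 2 * w 0"
  proof -
    have "(\<Sum>k<N. (v $ k)\<^sup>2) = 1"
      using unit v by (simp add: scalar_prod_def lessThan_atLeast0 power2_eq_square)
    moreover have "\<sigma> = (\<Sum>k<N. (v $ k)\<^sup>2) - 2 * (\<Sum>k<N. (if k = 0 then 1 else 0) * v $ k)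
        + (\<Sum>k<N. (if k = 0 then 1 else 0) * (if k = 0 then 1 else (0::real)))"
      unfolding \<sigma>_def w_def
      by (simp add: power2_eq_square algebra_simps sum.distrib sum_subtractf sum_distrib_left)
    ultimately show ?thesis
      using N by (simp add: sum_delta_mult w_def)
  qed
  \<comment> \<open>If \<sigma> = 0 then w = 0, and the junk value c = 2 / 0 = 0 makes the reflection the identity.\<close>
  have "c * c * \<sigma> = 2 * c"
    unfolding c_def by (cases "\<sigma> = 0") (simp_all add: field_simps)
  then have "orth_mat N (householder N c w)"
    unfolding \<sigma>_def by (rule householder_orth)
  moreover have "c * w 0 * w i = - w i" if "i < N" for i
  proof (cases "\<sigma> = 0")
    case True
    then have "w i = 0"
      using that unfolding \<sigma>_def by (simp add: sum_nonneg_eq_0_iff)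
    then show ?thesis by simp
  next
    case False
    then show ?thesis
      unfolding c_def using \<sigma> by (simp add: field_simps)
  qed
  then have "col (householder N c w) 0 = v"
    using N v by (intro eq_vecI) (auto simp: householder_def w_def algebra_simps)
  ultimately show ?thesis
    by blast
qed

lemma mat_diag_four_block:
  "mat_diag (Suc m) (\<lambda>i. if i = 0 then r else d (i - 1))
    = four_block_mat (mat_diag 1 (\<lambda>_. r)) (0\<^sub>m 1 m) (0\<^sub>m m 1) (mat_diag m d)"
  by (rule eq_matI) (auto simp: mat_diag_def)

lemma orth_diag_four_block:
  assumes U: "orth_mat m U"
  defines "F \<equiv> four_block_mat (1\<^sub>m 1) (0\<^sub>m 1 m) (0\<^sub>m m 1) U"
  shows "orth_mat (Suc m) F"
    and "orth_diag (Suc m) F (\<lambda>i. if i = 0 then r else d (i - 1))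
       = four_block_mat (mat_diag 1 (\<lambda>_. r)) (0\<^sub>m 1 m) (0\<^sub>m m 1) (orth_diag m U d)"
proof -
  note U_carrier = orth_mat_carrier[OF U]
  have FT: "transpose_mat F = four_block_mat (1\<^sub>m 1) (0\<^sub>m 1 m) (0\<^sub>m m 1) (transpose_mat U)"
    unfolding F_def
    by (simp add: transpose_four_block_mat[OF one_carrier_mat zero_carrier_mat zero_carrier_mat U_carrier])
  have "transpose_mat F * F = four_block_mat (1\<^sub>m 1) (0\<^sub>m 1 m) (0\<^sub>m m 1) (transpose_mat U * U)"
    unfolding FT unfolding F_def using U_carrier by (simp add: mult_four_block_mat[of _ 1 1 _ m _ m _ _ 1 _ m])
  then show "orth_mat (Suc m) F"
    unfolding orth_mat_def F_def
    using U_carrier orth_mat_transpose_mult[OF U] by (auto intro!: carrier_matI)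
  show "orth_diag (Suc m) F (\<lambda>i. if i = 0 then r else d (i - 1))
      = four_block_mat (mat_diag 1 (\<lambda>_. r)) (0\<^sub>m 1 m) (0\<^sub>m m 1) (orth_diag m U d)"
    unfolding orth_diag_def mat_diag_four_block FT unfolding F_def using U_carrier
    by (simp add: mult_four_block_mat[of _ 1 1 _ m _ m _ _ 1 _ m])
qed

lemma orth_conj_eigen_col:
  fixes A :: "real mat"
  assumes A: "A \<in> carrier_mat N N" and H: "orth_mat N H" and j: "j < N"
    and eigen: "A *\<^sub>v col H j = r \<cdot>\<^sub>v col H j" and i: "i < N"
  shows "(transpose_mat H * A * H) $$ (i, j) = (if i = j then r else 0)"
proof -
  have H_carrier: "H \<in> carrier_mat N N"
    using H by (rule orth_mat_carrier)
  have "transpose_mat H * A * H = transpose_mat H * (A * H)"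
    using A H_carrier by (simp add: assoc_mult_mat[of _ N N _ N _ N])
  then have "(transpose_mat H * A * H) $$ (i, j) = row (transpose_mat H) i \<bullet> col (A * H) j"
    using A H_carrier i j by simp
  also have "\<dots> = col H i \<bullet> (A *\<^sub>v col H j)"
    using A H_carrier i j by (simp add: mult_mat_vec_def)
  also have "\<dots> = r * (transpose_mat H * H) $$ (i, j)"
    unfolding eigen using H_carrier i j by (simp add: scalar_prod_smult_distrib[of _ N])
  finally show ?thesis
    using i j by (simp add: orth_mat_transpose_mult[OF H])
qed

lemma symmetric_deflate:
  fixes A :: "real mat"
  assumes A: "A \<in> carrier_mat (Suc m) (Suc m)" and sym: "transpose_mat A = A"
    and H: "orth_mat (Suc m) H" and eigen: "A *\<^sub>v col H 0 = r \<cdot>\<^sub>v col H 0"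
  shows "\<exists>C. C \<in> carrier_mat m m \<and> transpose_mat C = C \<and>
    transpose_mat H * A * H = four_block_mat (mat_diag 1 (\<lambda>_. r)) (0\<^sub>m 1 m) (0\<^sub>m m 1) C"
proof -
  let ?N = "Suc m"
  define B where "B = transpose_mat H * A * H"
  define C where "C = mat m m (\<lambda>(i, j). B $$ (Suc i, Suc j))"
  have H_carrier: "H \<in> carrier_mat ?N ?N"
    using H by (rule orth_mat_carrier)
  have B: "B \<in> carrier_mat ?N ?N"
    unfolding B_def using A H_carrier by simp
  have B_sym: "transpose_mat B = B"
    unfolding B_def using A H_carrier sym
    by (simp add: transpose_mult[of _ ?N ?N _ ?N] assoc_mult_mat[of _ ?N ?N _ ?N _ ?N])
  have B_col: "B $$ (i, 0) = (if i = 0 then r else 0)" if "i < ?N" for i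
    unfolding B_def using that by (simp add: orth_conj_eigen_col[OF A H _ eigen])
  have B_row: "B $$ (0, j) = (if j = 0 then r else 0)" if j: "j < ?N" for j
  proof -
    have "B $$ (0, j) = transpose_mat B $$ (j, 0)"
      using B j by simp
    then show ?thesis
      unfolding B_sym using B_col[OF j] by simp
  qed
  have "B = four_block_mat (mat_diag 1 (\<lambda>_. r)) (0\<^sub>m 1 m) (0\<^sub>m m 1) C"
  proof (rule eq_matI)
    fix i j assume "i < dim_row (four_block_mat (mat_diag 1 (\<lambda>_. r)) (0\<^sub>m 1 m) (0\<^sub>m m 1) C)"
      "j < dim_col (four_block_mat (mat_diag 1 (\<lambda>_. r)) (0\<^sub>m 1 m) (0\<^sub>m m 1) C)"
    then have i: "i < ?N" and j: "j < ?N" by (simp_all add: C_def)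
    show "B $$ (i, j) = four_block_mat (mat_diag 1 (\<lambda>_. r)) (0\<^sub>m 1 m) (0\<^sub>m m 1) C $$ (i, j)"
      using B_col B_row i j by (cases i; cases j) (auto simp: C_def mat_diag_def)
  qed (use B in \<open>simp_all add: C_def\<close>)
  moreover have "transpose_mat C = C"
  proof (rule eq_matI)
    fix i j assume ij: "i < dim_row C" "j < dim_col C"
    then have "B $$ (Suc j, Suc i) = transpose_mat B $$ (Suc i, Suc j)"
      using B by (simp add: C_def)
    then show "transpose_mat C $$ (i, j) = C $$ (i, j)"
      unfolding B_sym using ij by (simp add: C_def)
  qed (simp_all add: C_def)
  moreover have "C \<in> carrier_mat m m"
    unfolding C_def by simp
  ultimately show ?thesis
    unfolding B_def by blast
qed

theorem real_symmetric_orth_diag: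
  fixes A :: "real mat"
  assumes "A \<in> carrier_mat N N" and "transpose_mat A = A"
  shows "\<exists>U d. orth_mat N U \<and> A = orth_diag N U d"
  using assms
proof (induction N arbitrary: A)
  case 0
  have "orth_mat 0 (1\<^sub>m 0)" and "A = orth_diag 0 (1\<^sub>m 0) (\<lambda>_. 0)"
    using 0 by (auto simp: orth_mat_def orth_diag_def intro!: eq_matI)
  then show ?case by blast
next
  case (Suc m A)
  obtain r u where "eigenvector A u r"
    using real_symmetric_has_eigenvector[OF Suc.prems] by blast
  then obtain v where v: "v \<in> carrier_vec (Suc m)" "v \<bullet> v = 1" "A *\<^sub>v v = r \<cdot>\<^sub>v v"
    using unit_eigenvector[OF Suc.prems(1)] by blast
  obtain H where H: "orth_mat (Suc m) H" "col H 0 = v"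
    using orth_mat_with_first_col[OF v(1,2)] by blast
  obtain C where C: "C \<in> carrier_mat m m" "transpose_mat C = C"
    and HAH: "transpose_mat H * A * H = four_block_mat (mat_diag 1 (\<lambda>_. r)) (0\<^sub>m 1 m) (0\<^sub>m m 1) C"
    using symmetric_deflate[OF Suc.prems H(1)] v(3) H(2) by blast
  obtain U d where U: "orth_mat m U" and Cd: "C = orth_diag m U d"
    using Suc.IH[OF C] by blast
  define F where "F = four_block_mat (1\<^sub>m 1) (0\<^sub>m 1 m) (0\<^sub>m m 1) U"
  have F: "orth_mat (Suc m) F"
    unfolding F_def by (rule orth_diag_four_block(1)[OF U])
  have HAH_diag: "transpose_mat H * A * H = orth_diag (Suc m) F (\<lambda>i. if i = 0 then r else d (i - 1))"
    unfolding HAH Cd F_def by (rule orth_diag_four_block(2)[OF U, symmetric])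
  have "A = H * (transpose_mat H * A * H) * transpose_mat H"
    using Suc.prems(1) H(1) orth_mat_carrier[OF H(1)]
    by (simp add: assoc_mult_mat[of _ "Suc m" "Suc m" _ "Suc m" _ "Suc m"] orth_mat_cancel_right orth_mat_mult_transpose)
  also have "\<dots> = orth_diag (Suc m) (H * F) (\<lambda>i. if i = 0 then r else d (i - 1))"
    unfolding HAH_diag by (rule orth_diag_orth_conj[OF H(1) F])
  finally show ?case
    using orth_mat_mult[OF H(1) F] by blast
qed

section \<open>Powers of positive definite matrices\<close>

lemma sym_pos_def_orth_diag:
  assumes "sym_pos_def_mat N A"
  shows "\<exists>U d. orth_mat N U \<and> (\<forall>i<N. 0 < d i) \<and> A = orth_diag N U d"
proof -
  have A: "A \<in> carrier_mat N N" and sym: "transpose_mat A = A"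
    and pos: "\<And>x. x \<in> carrier_vec N \<Longrightarrow> x \<noteq> 0\<^sub>v N \<Longrightarrow> 0 < x \<bullet> (A *\<^sub>v x)"
    using assms unfolding sym_pos_def_mat_def by auto
  obtain U d where U: "orth_mat N U" and Ad: "A = orth_diag N U d"
    using real_symmetric_orth_diag[OF A sym] by blast
  note U_carrier = orth_mat_carrier[OF U]
  have "0 < d i" if i: "i < N" for i
  proof -
    have "transpose_mat U * (A * U) = mat_diag N d"
      unfolding Ad orth_diag_def using U U_carrier
      by (simp add: assoc_mult_mat[of _ N N _ N _ N] orth_mat_cancel_left orth_mat_transpose_mult)
    then have "d i = (transpose_mat U * (A * U)) $$ (i, i)"
      using i by (simp add: mat_diag_def)
    also have "\<dots> = col U i \<bullet> (A *\<^sub>v col U i)"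
      using A U_carrier i by (simp add: mult_mat_vec_def)
    finally have "d i = col U i \<bullet> (A *\<^sub>v col U i)" .
    moreover have "col U i \<bullet> col U i = 1"
      using arg_cong[OF orth_mat_transpose_mult[OF U], of "\<lambda>M. M $$ (i, i)"] U_carrier i by simp
    then have "col U i \<noteq> 0\<^sub>v N"
      by auto
    ultimately show ?thesis
      using pos[of "col U i"] U_carrier i by simp
  qed
  then show ?thesis
    using U Ad by blast
qed

lemma mat_rpow_orth_diag:
  assumes "sym_pos_def_mat N A"
  obtains U d where "orth_mat N U" "\<forall>i<N. 0 < d i" "A = orth_diag N U d"
    "mat_rpow A s = orth_diag N U (\<lambda>i. d i powr s)"
proof -
  let ?Q = "\<lambda>P. \<exists>U d. orth_mat N U \<and> (\<forall>i<N. 0 < d i) \<and> A = orth_diag N U d \<and>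
      P = orth_diag N U (\<lambda>i. d i powr s)"
  have "dim_row A = N"
    using assms unfolding sym_pos_def_mat_def by auto
  then have "mat_rpow A s = (SOME P. ?Q P)"
    unfolding mat_rpow_def orth_mat_def orth_diag_def by (simp add: conj_assoc)
  moreover have "\<exists>P. ?Q P"
    using sym_pos_def_orth_diag[OF assms] by blast
  then have "?Q (SOME P. ?Q P)"
    by (rule someI_ex)
  ultimately have "?Q (mat_rpow A s)"
    by (simp only:)
  then show ?thesis
    using that by blast
qed

theorem mainTheorem8:
  fixes n :: nat and A B :: "real mat"
  assumes "sym_pos_def_mat (2*n) A" and "sym_pos_def_mat (2*n) B"
    and "A * Jmat n * B = B * Jmat n * A"
    and "A * B = B * A"
  shows "\<forall>s::real. mat_rpow A s * Jmat n * mat_rpow B s = mat_rpow B s * Jmat n * mat_rpow A s"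
proof
  fix s :: real
  obtain U a where U: "orth_mat (2*n) U" "\<forall>i<2*n. 0 < a i"
    and A: "A = orth_diag (2*n) U a" and As: "mat_rpow A s = orth_diag (2*n) U (\<lambda>i. a i powr s)"
    using mat_rpow_orth_diag[OF assms(1), where s = s] by blast
  obtain V b where V: "orth_mat (2*n) V" "\<forall>i<2*n. 0 < b i"
    and B: "B = orth_diag (2*n) V b" and Bs: "mat_rpow B s = orth_diag (2*n) V (\<lambda>i. b i powr s)"
    using mat_rpow_orth_diag[OF assms(2), where s = s] by blast
  have J: "Jmat n \<in> carrier_mat (2*n) (2*n)"
    unfolding Jmat_def by simp
  show "mat_rpow A s * Jmat n * mat_rpow B s = mat_rpow B s * Jmat n * mat_rpow A s"
    unfolding As Bs using assms(3,4) unfolding A B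
    by (intro orth_diag_powr_sandwich_commute[OF U(1) V(1) J U(2) V(2)])
qed

end
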